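(* Let $a<b$, $\varepsilon>0$, $p>1$, $\theta>1$, $F(u)=\frac{1}{2\theta}|1-u^2|^\theta$, and let $D\in C^1(\mathbb{R})$ be strictly positive. Let $u\in C([0,T],H^3(a,b))$ be a solution of $$u_t=\Big[D(u)\big(-\varepsilon^p(|u_x|^{p-2}u_x)_x+F'(u)\big)_x\Big]_x,\qquad x\in(a,b),$$ satisfying the boundary conditions $u_x=0$ and $\big(-\varepsilon^p(|u_x|^{p-2}u_x)_x+F'(u)\big)_x=0$ at $x=a,b$ for all $t$. Then for every $t\in[0,T]$ $$\frac{d}{dt}E_\varepsilon[u](t)=-\varepsilon^{-1}\int_a^b\frac{\tilde u_t^2(x,t)}{D(u(x,t))}\,dx,$$ and consequently there exists $d>0$ such that $$E_\varepsilon[u](0)-E_\varepsilon[u](t)\ge d\,\varepsilon^{-1}\int_0^t\|\tilde u_t(\cdot,s)\|_{L^2(a,b)}^2\,ds\quad\text{for all } t\in[0,T].$$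
   Context: The energy is $E_\varepsilon[u]=\int_a^b\Big[\frac{\varepsilon^{p-1}|u_x|^p}{p}+\frac{F(u)}{\varepsilon}\Big]dx$, and $E_\varepsilon[u](t)$ denotes $E_\varepsilon[u(\cdot,t)]$. For a function $u$ on $[a,b]$, $\tilde u(x,t):=\int_a^x u(y,t)\,dy$ denotes its antiderivative vanishing at $a$. *)

theory Defs
  imports "HOL-Analysis.Analysis"
begin

definition Fpot :: "real \<Rightarrow> real \<Rightarrow> real" where
  "Fpot \<theta> v = (1 / (2 * \<theta>)) * \<bar>1 - v\<^sup>2\<bar> powr \<theta>"

text \<open>The p-Laplacian nonlinearity |v|^(p-2) v, written as sgn v * |v|^(p-1) (well defined at 0).\<close>
definition plap :: "real \<Rightarrow> real \<Rightarrow> real" where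
  "plap p v = sgn v * \<bar>v\<bar> powr (p - 1)"

definition energy :: "real \<Rightarrow> real \<Rightarrow> real \<Rightarrow> real \<Rightarrow> real \<Rightarrow> (real \<Rightarrow> real) \<Rightarrow> real" where
  "energy \<epsilon> p \<theta> a b v =
     integral {a..b} (\<lambda>x. \<epsilon> powr (p - 1) * \<bar>vector_derivative v (at x within {a..b})\<bar> powr p / p
                          + Fpot \<theta> (v x) / \<epsilon>)"

definition antideriv :: "real \<Rightarrow> (real \<Rightarrow> real) \<Rightarrow> real \<Rightarrow> real" where
  "antideriv a f x = integral {a..x} f"

end

theory Submission
  imports Defs
begin

text \<open>Differentiating the energy under the integral sign and integrating by parts twice
  (the boundary terms vanish because \<open>u\<^sub>x = \<mu>\<^sub>x = 0\<close> at \<open>a, b\<close>) gives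
  \<open>dE/dt = - \<epsilon>\<^sup>-\<^sup>1 \<integral> D(u) \<mu>\<^sub>x\<^sup>2\<close>, where \<open>\<mu> = - \<epsilon>\<^sup>p (|u\<^sub>x|\<^sup>p\<^sup>-\<^sup>2 u\<^sub>x)\<^sub>x + F'(u)\<close>.
  By the equation, \<open>D(u) \<mu>\<^sub>x\<close> is the antiderivative \<open>U\<close> of \<open>u\<^sub>t\<close> vanishing at \<open>a\<close>, which
  turns the dissipation into \<open>\<integral> U\<^sup>2 / D(u)\<close>. Bounding \<open>D(u)\<close> by a constant \<open>M\<close> on the compact
  set \<open>[a,b] \<times> [0,T]\<close> and integrating in time gives the second claim with \<open>d = 1/M\<close>.\<close>

lemma tendsto_abs_powr_at_0:
  fixes q :: real
  assumes "q > 0"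
  shows "((\<lambda>h::real. \<bar>h\<bar> powr q) \<longlongrightarrow> 0) (at 0)"
proof -
  have "((\<lambda>h::real. \<bar>h\<bar> powr q) \<longlongrightarrow> \<bar>0\<bar> powr q) (at 0)"
    using assms by (intro tendsto_intros) auto
  then show ?thesis by simp
qed

lemma has_real_derivative_abs_powr:
  fixes q w :: real
  assumes q: "q > 1"
  shows "((\<lambda>w. \<bar>w\<bar> powr q) has_real_derivative q * plap q w) (at w)"
proof -
  consider "w > 0" | "w < 0" | "w = 0" by linarith
  then show ?thesis
  proof cases
    case 1
    have "\<forall>\<^sub>F y in nhds w. \<bar>y\<bar> powr q = y powr q"
      using eventually_nhds_in_open[of "{0<..}" w] 1 by (auto elim!: eventually_mono)
    then show ?thesis
      using 1 has_real_derivative_powr[OF 1, of q]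
      by (subst DERIV_cong_ev[OF refl _ refl]) (simp_all add: plap_def)
  next
    case 2
    have "\<forall>\<^sub>F y in nhds w. \<bar>y\<bar> powr q = (- y) powr q"
      using eventually_nhds_in_open[of "{..<0}" w] 2 by (auto elim!: eventually_mono)
    moreover have "((\<lambda>y. (- y) powr q) has_real_derivative q * (- w) powr (q - of_nat 1) * - 1) (at w)"
      by (rule DERIV_fun_powr) (use 2 in \<open>auto intro!: derivative_eq_intros\<close>)
    ultimately show ?thesis
      using 2 by (subst DERIV_cong_ev[OF refl _ refl]) (simp_all add: plap_def)
  next
    case 3
    have "((\<lambda>h. (\<bar>0 + h\<bar> powr q - \<bar>0\<bar> powr q) / h) \<longlongrightarrow> 0) (at (0::real))"
    proof (rule Lim_null_comparison[OF _ tendsto_abs_powr_at_0[of "q - 1"]])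
      show "\<forall>\<^sub>F h in at 0. norm ((\<bar>0 + h\<bar> powr q - \<bar>0\<bar> powr q) / h) \<le> \<bar>h\<bar> powr (q - 1)"
        by (intro always_eventually allI) (simp add: powr_diff abs_divide)
    qed (use q in simp)
    then show ?thesis using 3 by (simp add: DERIV_def plap_def)
  qed
qed

lemma continuous_on_plap:
  fixes q :: real
  assumes q: "q > 1"
  shows "continuous_on UNIV (plap q)"
proof -
  have "isCont (plap q) w" for w
  proof (cases "w = 0")
    case False
    then show ?thesis unfolding plap_def by (intro continuous_intros) auto
  next
    case True
    have "(plap q \<longlongrightarrow> 0) (at 0)"
      by (rule Lim_null_comparison[OF _ tendsto_abs_powr_at_0[of "q - 1"]])
         (use q in \<open>auto simp: plap_def abs_mult sgn_if intro!: always_eventually\<close>)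
    then show ?thesis using True by (simp add: isCont_def plap_def)
  qed
  then show ?thesis by (simp add: continuous_on_eq_continuous_at)
qed

lemma has_real_derivative_Fpot:
  fixes \<theta> v :: real
  assumes \<theta>: "\<theta> > 1"
  shows "(Fpot \<theta> has_real_derivative - (v * plap \<theta> (1 - v\<^sup>2))) (at v)"
proof -
  have "((\<lambda>v. \<bar>1 - v\<^sup>2\<bar> powr \<theta>) has_real_derivative \<theta> * plap \<theta> (1 - v\<^sup>2) * - (2 * v)) (at v)"
    by (rule DERIV_chain2[OF has_real_derivative_abs_powr[OF \<theta>]]) (auto intro!: derivative_eq_intros)
  then have "((\<lambda>v. (1 / (2 * \<theta>)) * \<bar>1 - v\<^sup>2\<bar> powr \<theta>) has_real_derivative
      (1 / (2 * \<theta>)) * (\<theta> * plap \<theta> (1 - v\<^sup>2) * - (2 * v))) (at v)"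
    by (rule DERIV_cmult)
  then show ?thesis
    using \<theta> unfolding Fpot_def[abs_def] by (simp add: field_simps)
qed

lemma deriv_Fpot: "\<theta> > 1 \<Longrightarrow> deriv (Fpot \<theta>) v = - (v * plap \<theta> (1 - v\<^sup>2))"
  using has_real_derivative_Fpot DERIV_imp_deriv by blast

lemma continuous_on_deriv_Fpot:
  assumes "\<theta> > 1"
  shows "continuous_on UNIV (deriv (Fpot \<theta>))"
proof -
  have "continuous_on UNIV (\<lambda>v. plap \<theta> (1 - v\<^sup>2))"
    by (rule continuous_on_compose2[OF continuous_on_plap[OF assms]]) (auto intro!: continuous_intros)
  then show ?thesis
    using deriv_Fpot[OF assms] by (simp add: continuous_intros)
qed

lemma has_integral_product_derivative:
  fixes f g :: "real \<Rightarrow> real"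
  assumes "a \<le> b"
    and f: "\<And>x. x \<in> {a..b} \<Longrightarrow> (f has_real_derivative f' x) (at x within {a..b})"
    and g: "\<And>x. x \<in> {a..b} \<Longrightarrow> (g has_real_derivative g' x) (at x within {a..b})"
  shows "((\<lambda>x. f' x * g x + f x * g' x) has_integral f b * g b - f a * g a) {a..b}"
proof (rule fundamental_theorem_of_calculus[OF \<open>a \<le> b\<close>])
  fix x assume "x \<in> {a..b}"
  from DERIV_mult[OF f[OF this] g[OF this]]
  show "((\<lambda>x. f x * g x) has_vector_derivative f' x * g x + f x * g' x) (at x within {a..b})"
    by (simp add: has_real_derivative_iff_has_vector_derivative[symmetric] mult.commute)
qed

lemma antideriv_eq_diff:
  assumes x: "x \<in> {a..b}"
    and F: "\<And>y. y \<in> {a..b} \<Longrightarrow> (F has_real_derivative f y) (at y within {a..b})"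
  shows "antideriv a f x = F x - F a"
  unfolding antideriv_def
proof (rule integral_unique, rule fundamental_theorem_of_calculus)
  show "a \<le> x" using x by simp
  fix y assume "y \<in> {a..x}"
  with x have "(F has_real_derivative f y) (at y within {a..x})"
    by (intro DERIV_subset[OF F]) auto
  then show "(F has_vector_derivative f y) (at y within {a..x})"
    by (simp add: has_real_derivative_iff_has_vector_derivative)
qed

text \<open>Here \<open>\<mu> = - c w' + f\<close> plays the chemical potential and \<open>v = (k \<mu>')'\<close> the time
  derivative \<open>u\<^sub>t\<close>; the identity comes from two integrations by parts.\<close>
lemma dissipation_has_integral:
  fixes w wx v vx f mux k :: "real \<Rightarrow> real"
  assumes "a \<le> b"
    and w: "\<And>x. x \<in> {a..b} \<Longrightarrow> (w has_real_derivative wx x) (at x within {a..b})"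
    and v: "\<And>x. x \<in> {a..b} \<Longrightarrow> (v has_real_derivative vx x) (at x within {a..b})"
    and mu: "\<And>x. x \<in> {a..b} \<Longrightarrow>
               ((\<lambda>y. - c * wx y + f y) has_real_derivative mux x) (at x within {a..b})"
    and flux: "\<And>x. x \<in> {a..b} \<Longrightarrow>
               ((\<lambda>y. k y * mux y) has_real_derivative v x) (at x within {a..b})"
    and bc: "w a = 0" "w b = 0" "mux a = 0" "mux b = 0"
  shows "((\<lambda>x. c * w x * vx x + f x * v x) has_integral
           - integral {a..b} (\<lambda>x. k x * (mux x)\<^sup>2)) {a..b}"
proof -
  define \<mu> where "\<mu> y = - c * wx y + f y" for y
  have by_parts_w: "((\<lambda>x. wx x * v x + w x * vx x) has_integral 0) {a..b}"
    using has_integral_product_derivative[OF \<open>a \<le> b\<close> w v] bc by simp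
  have by_parts_mu: "((\<lambda>x. mux x * (k x * mux x) + \<mu> x * v x) has_integral 0) {a..b}"
    using has_integral_product_derivative[OF \<open>a \<le> b\<close> mu flux] bc by (simp add: \<mu>_def)
  have "continuous_on {a..b} (\<lambda>x. \<mu> x * v x)"
    using DERIV_continuous_on[OF mu] DERIV_continuous_on[OF v]
    by (simp add: \<mu>_def continuous_on_mult)
  then have "((\<lambda>x. \<mu> x * v x) has_integral integral {a..b} (\<lambda>x. \<mu> x * v x)) {a..b}"
    by (intro integrable_integral integrable_continuous_interval)
  from has_integral_diff[OF by_parts_mu this]
  have "(\<lambda>x. k x * (mux x)\<^sup>2) integrable_on {a..b}"
    by (simp add: integrable_on_def power2_eq_square algebra_simps) blast
  from has_integral_diff[OF has_integral_add[OF has_integral_mult_right[OF by_parts_w, of c]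
      by_parts_mu] integrable_integral[OF this]]
  show ?thesis
    by (simp add: \<mu>_def power2_eq_square algebra_simps)
qed

lemma integral_energy_rate_eq:
  fixes u ux ut uxt wx mux k :: "real \<Rightarrow> real"
  assumes "a \<le> b" "\<epsilon> > 0" and k_pos: "\<And>x. x \<in> {a..b} \<Longrightarrow> 0 < k x"
    and w_x: "\<And>x. x \<in> {a..b} \<Longrightarrow>
                ((\<lambda>y. plap p (ux y)) has_real_derivative wx x) (at x within {a..b})"
    and ut_x: "\<And>x. x \<in> {a..b} \<Longrightarrow> (ut has_real_derivative uxt x) (at x within {a..b})"
    and mu_x: "\<And>x. x \<in> {a..b} \<Longrightarrow>
                ((\<lambda>y. - (\<epsilon> powr p) * wx y + deriv (Fpot \<theta>) (u y))
                   has_real_derivative mux x) (at x within {a..b})"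
    and flux: "\<And>x. x \<in> {a..b} \<Longrightarrow>
                ((\<lambda>y. k y * mux y) has_real_derivative ut x) (at x within {a..b})"
    and bc: "ux a = 0" "ux b = 0" "mux a = 0" "mux b = 0"
  shows "integral {a..b} (\<lambda>x. \<epsilon> powr (p - 1) * plap p (ux x) * uxt x
                              + deriv (Fpot \<theta>) (u x) * ut x / \<epsilon>)
         = - (1 / \<epsilon>) * integral {a..b} (\<lambda>x. (antideriv a ut x)\<^sup>2 / k x)"
proof -
  have "((\<lambda>x. \<epsilon> powr p * plap p (ux x) * uxt x + deriv (Fpot \<theta>) (u x) * ut x)
          has_integral - integral {a..b} (\<lambda>x. k x * (mux x)\<^sup>2)) {a..b}"
    using dissipation_has_integral[OF \<open>a \<le> b\<close> w_x ut_x mu_x flux] bc by (simp add: plap_def)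
  from has_integral_divide[OF this, of \<epsilon>]
  have "integral {a..b} (\<lambda>x. \<epsilon> powr (p - 1) * plap p (ux x) * uxt x
                               + deriv (Fpot \<theta>) (u x) * ut x / \<epsilon>)
        = - (1 / \<epsilon>) * integral {a..b} (\<lambda>x. k x * (mux x)\<^sup>2)"
    using \<open>\<epsilon> > 0\<close> by (auto dest!: integral_unique simp: powr_diff add_divide_distrib)
  also have "\<dots> = - (1 / \<epsilon>) * integral {a..b} (\<lambda>x. (antideriv a ut x)\<^sup>2 / k x)"
  proof (intro arg_cong[where f = "\<lambda>I. - (1 / \<epsilon>) * I"] integral_cong)
    fix x assume "x \<in> {a..b}"
    from antideriv_eq_diff[OF this flux] bc k_pos[OF this]
    show "k x * (mux x)\<^sup>2 = (antideriv a ut x)\<^sup>2 / k x"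
      by (simp add: power2_eq_square)
  qed
  finally show ?thesis .
qed

lemma energy_eq_integral:
  assumes "a < b"
    and "\<And>x. x \<in> {a..b} \<Longrightarrow> (v has_real_derivative v' x) (at x within {a..b})"
  shows "energy \<epsilon> p \<theta> a b v =
           integral {a..b} (\<lambda>x. \<epsilon> powr (p - 1) * \<bar>v' x\<bar> powr p / p + Fpot \<theta> (v x) / \<epsilon>)"
  unfolding energy_def
proof (rule integral_cong)
  fix x assume "x \<in> {a..b}"
  with assms have "vector_derivative v (at x within {a..b}) = v' x"
    by (intro vector_derivative_within_cbox[of a b, simplified])
       (simp_all add: has_real_derivative_iff_has_vector_derivative[symmetric])
  then show "\<epsilon> powr (p - 1) * \<bar>vector_derivative v (at x within {a..b})\<bar> powr p / p
      + Fpot \<theta> (v x) / \<epsilon> = \<epsilon> powr (p - 1) * \<bar>v' x\<bar> powr p / p + Fpot \<theta> (v x) / \<epsilon>"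
    by simp
qed

lemma continuous_on_slice:
  assumes "continuous_on (A \<times> B) (\<lambda>(x, t). f x t)" "t \<in> B"
  shows "continuous_on A (\<lambda>x. f x t)"
  using continuous_on_compose2[OF assms(1) continuous_on_Pair[OF continuous_on_id continuous_on_const]]
    assms(2)
  by auto

lemma continuous_on_swap_args:
  assumes "continuous_on (A \<times> B) (\<lambda>(x, t). f x t)"
  shows "continuous_on (B \<times> A) (\<lambda>(t, x). f x t)"
proof -
  have "prod.swap ` (B \<times> A) \<subseteq> A \<times> B" by auto
  then show ?thesis
    using continuous_on_compose2[OF assms continuous_on_swap[of "B \<times> A"]]
    by (auto simp: case_prod_beta)
qed

lemma has_real_derivative_energy:
  fixes u ux ut uxt :: "real \<Rightarrow> real \<Rightarrow> real"
  assumes "a < b" and p: "p > 1" and \<theta>: "\<theta> > 1" and S: "convex S" "t \<in> S"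
    and u_x: "\<And>x s. x \<in> {a..b} \<Longrightarrow> s \<in> S \<Longrightarrow>
                ((\<lambda>y. u y s) has_real_derivative ux x s) (at x within {a..b})"
    and u_t: "\<And>x s. x \<in> {a..b} \<Longrightarrow> s \<in> S \<Longrightarrow>
                ((\<lambda>s. u x s) has_real_derivative ut x s) (at s within S)"
    and ux_t: "\<And>x s. x \<in> {a..b} \<Longrightarrow> s \<in> S \<Longrightarrow>
                ((\<lambda>s. ux x s) has_real_derivative uxt x s) (at s within S)"
    and cont: "continuous_on ({a..b} \<times> S) (\<lambda>(x, s). u x s)"
              "continuous_on ({a..b} \<times> S) (\<lambda>(x, s). ux x s)"
              "continuous_on ({a..b} \<times> S) (\<lambda>(x, s). ut x s)"
              "continuous_on ({a..b} \<times> S) (\<lambda>(x, s). uxt x s)"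
  shows "((\<lambda>s. energy \<epsilon> p \<theta> a b (\<lambda>x. u x s)) has_real_derivative
           integral {a..b} (\<lambda>x. \<epsilon> powr (p - 1) * plap p (ux x t) * uxt x t
                                 + deriv (Fpot \<theta>) (u x t) * ut x t / \<epsilon>)) (at t within S)"
proof -
  define G where "G s x = \<epsilon> powr (p - 1) * \<bar>ux x s\<bar> powr p / p + Fpot \<theta> (u x s) / \<epsilon>" for s x
  define Gt where "Gt s x = \<epsilon> powr (p - 1) * plap p (ux x s) * uxt x s
                              + deriv (Fpot \<theta>) (u x s) * ut x s / \<epsilon>" for s x
  have energy_G: "energy \<epsilon> p \<theta> a b (\<lambda>x. u x s) = integral {a..b} (G s)"
    and integrable_G: "G s integrable_on {a..b}" if s: "s \<in> S" for s
  proof -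
    have "continuous_on UNIV (\<lambda>w::real. \<bar>w\<bar> powr p)" "continuous_on UNIV (Fpot \<theta>)"
      using has_real_derivative_abs_powr[OF p] has_real_derivative_Fpot[OF \<theta>]
      by (auto simp: continuous_on_eq_continuous_at intro: DERIV_isCont)
    from continuous_on_compose2[OF this(1) continuous_on_slice[OF cont(2) s]]
      continuous_on_compose2[OF this(2) continuous_on_slice[OF cont(1) s]]
    have slices: "continuous_on {a..b} (\<lambda>x. \<bar>ux x s\<bar> powr p)"
      "continuous_on {a..b} (\<lambda>x. Fpot \<theta> (u x s))"
      by auto
    have "continuous_on {a..b} (G s)"
      unfolding G_def divide_inverse by (intro continuous_on_add continuous_on_mult continuous_on_const slices)
    then show "G s integrable_on {a..b}"
      by (rule integrable_continuous_interval)
    show "energy \<epsilon> p \<theta> a b (\<lambda>x. u x s) = integral {a..b} (G s)"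
      unfolding G_def by (rule energy_eq_integral[OF \<open>a < b\<close> u_x[OF _ s]])
  qed
  have G_deriv: "((\<lambda>s. G s x) has_real_derivative Gt s x) (at s within S)"
    if "s \<in> S" "x \<in> {a..b}" for s x
  proof -
    have "((\<lambda>s. \<bar>ux x s\<bar> powr p) has_real_derivative p * plap p (ux x s) * uxt x s)
        (at s within S)"
      using DERIV_chain2[OF has_real_derivative_abs_powr[OF p] ux_t[OF that(2,1)]] by simp
    moreover have "((\<lambda>s. Fpot \<theta> (u x s)) has_real_derivative deriv (Fpot \<theta>) (u x s) * ut x s)
        (at s within S)"
      using DERIV_chain2[OF has_real_derivative_Fpot[OF \<theta>] u_t[OF that(2,1)]]
      by (simp add: deriv_Fpot[OF \<theta>])
    ultimately have "((\<lambda>s. G s x) has_real_derivative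
        \<epsilon> powr (p - 1) * (p * plap p (ux x s) * uxt x s) / p + deriv (Fpot \<theta>) (u x s) * ut x s / \<epsilon>)
        (at s within S)"
      unfolding G_def by (intro DERIV_add DERIV_cdivide DERIV_cmult)
    then show ?thesis
      using p by (simp add: Gt_def mult.assoc)
  qed
  have Gt_cont: "continuous_on (S \<times> cbox a b) (\<lambda>(s, x). Gt s x)"
    unfolding Gt_def
    using continuous_on_swap_args[OF cont(1)] continuous_on_swap_args[OF cont(2)]
      continuous_on_swap_args[OF cont(3)] continuous_on_swap_args[OF cont(4)]
      continuous_on_compose2[OF continuous_on_plap[OF p] continuous_on_swap_args[OF cont(2)]]
      continuous_on_compose2[OF continuous_on_deriv_Fpot[OF \<theta>] continuous_on_swap_args[OF cont(1)]]
    unfolding divide_inverse by (auto simp: case_prod_beta' intro!: continuous_intros)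
  have "((\<lambda>s. integral {a..b} (G s)) has_real_derivative integral {a..b} (Gt t)) (at t within S)"
    using leibniz_rule_field_derivative[of S a b G Gt, unfolded box_real, OF G_deriv integrable_G _ S(2,1)]
      Gt_cont by simp
  then show ?thesis
    unfolding Gt_def
    by (rule has_field_derivative_transform_within[where d=1]) (use S energy_G in auto)
qed

lemma integral_le_mult_decrease:
  fixes E g h :: "real \<Rightarrow> real"
  assumes "c \<le> d" "M \<ge> 0"
    and E: "\<And>s. s \<in> {c..d} \<Longrightarrow> (E has_real_derivative - h s) (at s within {c..d})"
    and h: "\<And>s. s \<in> {c..d} \<Longrightarrow> 0 \<le> h s"
    and g: "\<And>s. s \<in> {c..d} \<Longrightarrow> g s \<le> M * h s"
  shows "integral {c..d} g \<le> M * (E c - E d)"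
proof -
  have "((\<lambda>s. - h s) has_integral E d - E c) {c..d}"
    using E by (intro fundamental_theorem_of_calculus[OF \<open>c \<le> d\<close>])
               (simp add: has_real_derivative_iff_has_vector_derivative[symmetric])
  from has_integral_neg[OF this] have h_int: "(h has_integral E c - E d) {c..d}"
    by simp
  show ?thesis
  proof (cases "g integrable_on {c..d}")
    case True
    have "integral {c..d} g \<le> integral {c..d} (\<lambda>s. M * h s)"
      using g h_int by (intro integral_le[OF True] integrable_on_mult_right) auto
    then show ?thesis
      using h_int by (simp add: integral_unique)
  next
    case False
    have "0 \<le> E c - E d"
      using has_integral_nonneg[OF h_int h] .
    then show ?thesis
      using False \<open>M \<ge> 0\<close> by (simp add: not_integrable_integral)
  qed
qed

lemma integral_square_le_weighted:
  fixes A k :: "real \<Rightarrow> real"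
  assumes A: "continuous_on {a..b} A" and k: "continuous_on {a..b} k"
    and k_pos: "\<And>x. x \<in> {a..b} \<Longrightarrow> 0 < k x" and k_le: "\<And>x. x \<in> {a..b} \<Longrightarrow> k x \<le> M"
  shows "integral {a..b} (\<lambda>x. (A x)\<^sup>2) \<le> M * integral {a..b} (\<lambda>x. (A x)\<^sup>2 / k x)"
proof -
  have "(\<lambda>x. (A x)\<^sup>2 / k x) integrable_on {a..b}"
    using A k k_pos by (intro integrable_continuous_interval continuous_intros) force+
  moreover have "(\<lambda>x. (A x)\<^sup>2) integrable_on {a..b}"
    using A by (intro integrable_continuous_interval continuous_intros)
  moreover have "(A x)\<^sup>2 \<le> M * ((A x)\<^sup>2 / k x)" if "x \<in> {a..b}" for x
  proof -
    have "(A x)\<^sup>2 = k x * ((A x)\<^sup>2 / k x)" using k_pos[OF that] by simp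
    also have "\<dots> \<le> M * ((A x)\<^sup>2 / k x)"
      using k_pos[OF that] k_le[OF that] by (intro mult_right_mono) auto
    finally show ?thesis .
  qed
  ultimately have "integral {a..b} (\<lambda>x. (A x)\<^sup>2) \<le> integral {a..b} (\<lambda>x. M * ((A x)\<^sup>2 / k x))"
    by (intro integral_le integrable_on_mult_right)
  then show ?thesis
    by (simp only: integral_mult_right)
qed

lemma decrease_ge_of_weighted_dissipation:
  fixes E :: "real \<Rightarrow> real" and A k :: "real \<Rightarrow> real \<Rightarrow> real"
  assumes "\<epsilon> > 0"
    and E: "\<And>t. t \<in> {0..T} \<Longrightarrow> (E has_real_derivative
              - (1 / \<epsilon>) * integral {a..b} (\<lambda>x. (A x t)\<^sup>2 / k x t)) (at t within {0..T})"
    and A: "continuous_on ({a..b} \<times> {0..T}) (\<lambda>(x, t). A x t)"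
    and k: "continuous_on ({a..b} \<times> {0..T}) (\<lambda>(x, t). k x t)"
    and k_pos: "\<And>x t. x \<in> {a..b} \<Longrightarrow> t \<in> {0..T} \<Longrightarrow> 0 < k x t"
  shows "\<exists>d > 0. \<forall>t \<in> {0..T}.
           E 0 - E t \<ge> d / \<epsilon> * integral {0..t} (\<lambda>s. integral {a..b} (\<lambda>x. (A x s)\<^sup>2))"
proof -
  have "bounded ((\<lambda>(x, t). k x t) ` ({a..b} \<times> {0..T}))"
    by (intro compact_imp_bounded compact_continuous_image k compact_Times compact_Icc)
  then obtain M where "M > 0" and k_le: "\<And>x t. x \<in> {a..b} \<Longrightarrow> t \<in> {0..T} \<Longrightarrow> k x t \<le> M"
    unfolding bounded_pos by force
  define h where "h s = (1 / \<epsilon>) * integral {a..b} (\<lambda>x. (A x s)\<^sup>2 / k x s)" for s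
  have h_nonneg: "0 \<le> h s" if s: "s \<in> {0..T}" for s
  proof -
    have "0 \<le> integral {a..b} (\<lambda>x. (A x s)\<^sup>2 / k x s)"
      using k_pos[OF _ s] less_imp_le[OF k_pos[OF _ s]]
      by (cases "(\<lambda>x. (A x s)\<^sup>2 / k x s) integrable_on {a..b}")
         (auto intro!: integral_nonneg simp: not_integrable_integral)
    then show ?thesis using \<open>\<epsilon> > 0\<close> by (simp add: h_def)
  qed
  have "E 0 - E t \<ge> 1 / M / \<epsilon> * integral {0..t} (\<lambda>s. integral {a..b} (\<lambda>x. (A x s)\<^sup>2))"
    if t: "t \<in> {0..T}" for t
  proof -
    have "integral {0..t} (\<lambda>s. integral {a..b} (\<lambda>x. (A x s)\<^sup>2)) \<le> (\<epsilon> * M) * (E 0 - E t)"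
    proof (rule integral_le_mult_decrease)
      fix s assume "s \<in> {0..t}"
      with t have s: "s \<in> {0..T}" by simp
      have "{0..t} \<subseteq> {0..T}" using t by auto
      from DERIV_subset[OF E[OF s] this]
      show "(E has_real_derivative - h s) (at s within {0..t})"
        by (simp add: h_def)
      show "integral {a..b} (\<lambda>x. (A x s)\<^sup>2) \<le> \<epsilon> * M * h s"
        using integral_square_le_weighted[OF continuous_on_slice[OF A s] continuous_on_slice[OF k s]]
          k_pos[OF _ s] k_le[OF _ s] \<open>\<epsilon> > 0\<close> by (simp add: h_def)
      show "0 \<le> h s" using h_nonneg[OF s] .
    qed (use t \<open>\<epsilon> > 0\<close> \<open>M > 0\<close> in auto)
    then show ?thesis
      using \<open>\<epsilon> > 0\<close> \<open>M > 0\<close> by (simp add: field_simps)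
  qed
  then show ?thesis
    using \<open>M > 0\<close> by (intro exI[of _ "1 / M"]) auto
qed

theorem lemma3p1:
  fixes a b \<epsilon> p \<theta> T :: real
    and D :: "real \<Rightarrow> real"
    and u ux ut uxt wx mux J :: "real \<Rightarrow> real \<Rightarrow> real"
  assumes ab: "a < b" and eps: "\<epsilon> > 0" and p: "p > 1" and th: "\<theta> > 1" and T: "T > 0"
    and D_C1: "D C1_differentiable_on UNIV" and D_pos: "\<And>v. D v > 0"
    \<comment> \<open>classical regularity of the solution on [a,b] x [0,T]\<close>
    and u_x: "\<And>x t. x \<in> {a..b} \<Longrightarrow> t \<in> {0..T} \<Longrightarrow>
                ((\<lambda>y. u y t) has_real_derivative ux x t) (at x within {a..b})"
    and w_x: "\<And>x t. x \<in> {a..b} \<Longrightarrow> t \<in> {0..T} \<Longrightarrow>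
                ((\<lambda>y. plap p (ux y t)) has_real_derivative wx x t) (at x within {a..b})"
    and mu_x: "\<And>x t. x \<in> {a..b} \<Longrightarrow> t \<in> {0..T} \<Longrightarrow>
                ((\<lambda>y. - (\<epsilon> powr p) * wx y t + deriv (Fpot \<theta>) (u y t))
                   has_real_derivative mux x t) (at x within {a..b})"
    and J_x: "\<And>x t. x \<in> {a..b} \<Longrightarrow> t \<in> {0..T} \<Longrightarrow>
                ((\<lambda>y. D (u y t) * mux y t) has_real_derivative J x t) (at x within {a..b})"
    and u_t: "\<And>x t. x \<in> {a..b} \<Longrightarrow> t \<in> {0..T} \<Longrightarrow>
                ((\<lambda>s. u x s) has_real_derivative ut x t) (at t within {0..T})"
    and ux_t: "\<And>x t. x \<in> {a..b} \<Longrightarrow> t \<in> {0..T} \<Longrightarrow>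
                ((\<lambda>s. ux x s) has_real_derivative uxt x t) (at t within {0..T})"
    and ut_x: "\<And>x t. x \<in> {a..b} \<Longrightarrow> t \<in> {0..T} \<Longrightarrow>
                ((\<lambda>y. ut y t) has_real_derivative uxt x t) (at x within {a..b})"
    and cont: "continuous_on ({a..b} \<times> {0..T}) (\<lambda>(x, t). u x t)"
              "continuous_on ({a..b} \<times> {0..T}) (\<lambda>(x, t). ux x t)"
              "continuous_on ({a..b} \<times> {0..T}) (\<lambda>(x, t). ut x t)"
              "continuous_on ({a..b} \<times> {0..T}) (\<lambda>(x, t). uxt x t)"
              "continuous_on ({a..b} \<times> {0..T}) (\<lambda>(x, t). wx x t)"
              "continuous_on ({a..b} \<times> {0..T}) (\<lambda>(x, t). mux x t)"
    \<comment> \<open>the equation u_t = [D(u) mu_x]_x\<close>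
    and eqn: "\<And>x t. x \<in> {a..b} \<Longrightarrow> t \<in> {0..T} \<Longrightarrow> ut x t = J x t"
    \<comment> \<open>boundary conditions u_x = 0 and mu_x = 0 at x = a, b\<close>
    and bc: "\<And>t. t \<in> {0..T} \<Longrightarrow> ux a t = 0 \<and> ux b t = 0 \<and> mux a t = 0 \<and> mux b t = 0"
  shows "(\<forall>t \<in> {0..T}.
            ((\<lambda>s. energy \<epsilon> p \<theta> a b (\<lambda>x. u x s)) has_real_derivative
               - (1 / \<epsilon>) * integral {a..b}
                   (\<lambda>x. (antideriv a (\<lambda>y. ut y t) x)\<^sup>2 / D (u x t))) (at t within {0..T}))
       \<and> (\<exists>d > 0. \<forall>t \<in> {0..T}.
            energy \<epsilon> p \<theta> a b (\<lambda>x. u x 0) - energy \<epsilon> p \<theta> a b (\<lambda>x. u x t)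
              \<ge> d / \<epsilon> * integral {0..t}
                   (\<lambda>s. integral {a..b} (\<lambda>x. (antideriv a (\<lambda>y. ut y s) x)\<^sup>2)))"
proof -
  have flux: "((\<lambda>y. D (u y t) * mux y t) has_real_derivative ut x t) (at x within {a..b})"
    if "x \<in> {a..b}" "t \<in> {0..T}" for x t
    using J_x[OF that] eqn[OF that] by simp
  have antideriv_flux: "antideriv a (\<lambda>y. ut y t) x = D (u x t) * mux x t"
    if "x \<in> {a..b}" "t \<in> {0..T}" for x t
    using antideriv_eq_diff[OF that(1) flux[OF _ that(2)]] bc[OF that(2)] by simp
  have D_cont: "continuous_on ({a..b} \<times> {0..T}) (\<lambda>(x, t). D (u x t))"
    using continuous_on_compose2[OF C1_differentiable_imp_continuous_on[OF D_C1] cont(1)]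
    by (simp add: case_prod_beta)
  have "continuous_on ({a..b} \<times> {0..T}) (\<lambda>(x, t). D (u x t) * mux x t)"
    using continuous_on_mult[OF D_cont cont(6)] by (simp add: case_prod_beta)
  then have antideriv_cont:
    "continuous_on ({a..b} \<times> {0..T}) (\<lambda>(x, t). antideriv a (\<lambda>y. ut y t) x)"
    by (rule continuous_on_eq) (auto simp: antideriv_flux)
  have rate: "((\<lambda>s. energy \<epsilon> p \<theta> a b (\<lambda>x. u x s)) has_real_derivative
               - (1 / \<epsilon>) * integral {a..b}
                   (\<lambda>x. (antideriv a (\<lambda>y. ut y t) x)\<^sup>2 / D (u x t))) (at t within {0..T})"
    if t: "t \<in> {0..T}" for t
    using has_real_derivative_energy[OF ab p th convex_real_interval(5) t u_x u_t ux_t cont(1-4),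
        of \<epsilon>]
      integral_energy_rate_eq[OF _ eps _ w_x[OF _ t] ut_x[OF _ t] mu_x[OF _ t] flux[OF _ t]]
      bc[OF t] ab D_pos
    by simp
  show ?thesis
    using rate decrease_ge_of_weighted_dissipation[OF eps rate antideriv_cont D_cont] D_pos
    by blast
qed

end
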